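(* Let $G$ be an $n$-vertex graph, $k$ an integer, and $H\subseteq G$ a $k$-spanner of $G$ that contains a cycle. Let $C$ be any shortest cycle of $H$ and let $L_H$ be its length. If $2(n-k)\le L_H\le k+1$, then there exists an edge $e$ of $C$ such that $H\setminus\{e\}$ (the graph $H$ with edge $e$ removed) is still a $k$-spanner of $G$.
   Context: All graphs are undirected and unweighted. For a graph $G=(V,E)$ and integer $k$, a $k$-spanner of $G$ is a subgraph $H=(V,E')$, $E'\subseteq E$, with $\mathrm{dist}_H(u,v)\le k\cdot\mathrm{dist}_G(u,v)$ for all $u,v\in V$. *)

theory Defs
  imports Main "HOL-Library.Extended_Nat"
begin

definition graph :: "'a set \<Rightarrow> 'a set set \<Rightarrow> bool" where
  "graph V E \<longleftrightarrow> finite V \<and> (\<forall>e\<in>E. \<exists>u v. e = {u, v} \<and> u \<noteq> v \<and> u \<in> V \<and> v \<in> V)"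

definition walk :: "'a set set \<Rightarrow> 'a list \<Rightarrow> bool" where
  "walk E p \<longleftrightarrow> p \<noteq> [] \<and> (\<forall>i. Suc i < length p \<longrightarrow> {p ! i, p ! Suc i} \<in> E)"

definition gdist :: "'a set set \<Rightarrow> 'a \<Rightarrow> 'a \<Rightarrow> enat" where
  "gdist E u v = (INF p \<in> {p. walk E p \<and> hd p = u \<and> last p = v}. enat (length p - 1))"

definition is_spanner :: "'a set \<Rightarrow> 'a set set \<Rightarrow> 'a set set \<Rightarrow> nat \<Rightarrow> bool" where
  "is_spanner V E H k \<longleftrightarrow> H \<subseteq> E \<and>
     (\<forall>u\<in>V. \<forall>v\<in>V. gdist H u v \<le> enat k * gdist E u v)"

definition is_cycle :: "'a set \<Rightarrow> 'a set set \<Rightarrow> 'a list \<Rightarrow> bool" where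
  "is_cycle V E c \<longleftrightarrow> length c \<ge> 3 \<and> distinct c \<and> set c \<subseteq> V \<and>
     (\<forall>i < length c. {c ! i, c ! ((i + 1) mod length c)} \<in> E)"

definition cycle_edges :: "'a list \<Rightarrow> 'a set set" where
  "cycle_edges c = {{c ! i, c ! ((i + 1) mod length c)} | i. i < length c}"

end

theory Submission
  imports Defs
begin

text \<open>
  Write S for the vertices off the cycle C, of which there are n - L. A vertex w joined to C
  in H has a depth (its H-distance to C) and a root (a nearest cycle vertex). On a shortest
  path from w to its root, all vertices but the last lie in S, share the root of w and have
  distinct depths; so depth w is at most the number \<kappa> x (tree_size x) of vertices of S rooted
  at x = root w.

  Delete a cycle edge e. An edge uv of G has an H-path of length at most k, which survives in
  H - e if it avoids C. Otherwise its parts before the first and after the last cycle vertex are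
  disjoint runs in S, so depth u + depth v \<le> |S| \<le> k, and going from u to its root, along the
  path C - e to the root of v and on to v gives a walk of length depth u + d + depth v, with d
  the distance of the two roots on C - e. This exceeds k only if e lies within r x edges of the
  root x of u or of v, where the radii r come from \<kappa> by subtracting the slack s = k + 1 - L in
  total and still satisfy \<kappa> p + \<kappa> q \<le> r p + r q + s for distinct p, q. These arcs cover at
  most 2 (|S| - s) < L edges, as 2 (n - k) \<le> L, so some cycle edge avoids all of them and can be
  deleted.
\<close>

lemma walk_Cons_Cons: "walk A (x # y # p) \<longleftrightarrow> {x, y} \<in> A \<and> walk A (y # p)"
  unfolding walk_def by (auto simp: nth_Cons split: nat.splits)

lemma walk_singleton [simp]: "walk A [x]"
  by (simp add: walk_def)

lemma walk_mono: "walk A p \<Longrightarrow> A \<subseteq> B \<Longrightarrow> walk B p"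
  unfolding walk_def by blast

lemma walk_take: "walk A p \<Longrightarrow> 0 < n \<Longrightarrow> walk A (take n p)"
  unfolding walk_def by auto

lemma walk_drop: "walk A p \<Longrightarrow> n < length p \<Longrightarrow> walk A (drop n p)"
  unfolding walk_def by auto

lemma walk_rev: "walk A p \<Longrightarrow> walk A (rev p)"
  unfolding walk_def
proof (intro conjI allI impI)
  fix i assume p: "p \<noteq> [] \<and> (\<forall>i. Suc i < length p \<longrightarrow> {p ! i, p ! Suc i} \<in> A)"
    and i: "Suc i < length (rev p)"
  then have "{p ! (length p - Suc (Suc i)), p ! Suc (length p - Suc (Suc i))} \<in> A"
    by auto
  moreover have "Suc (length p - Suc (Suc i)) = length p - Suc i" using i by auto
  ultimately show "{rev p ! i, rev p ! Suc i} \<in> A" using i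
    by (auto simp: rev_nth insert_commute)
qed auto

lemma walk_append_tl:
  assumes "walk A p" "walk A q" "last p = hd q"
  shows "walk A (p @ tl q)"
  using assms
proof (induction p rule: induct_list012)
  case (2 x) then show ?case by (cases q) auto
next
  case (3 x y zs) then show ?case by (simp add: walk_Cons_Cons)
qed (simp add: walk_def)

lemma walk_join:
  assumes "walk A p" "walk A q" "last p = hd q"
  shows "walk A (p @ tl q)" "hd (p @ tl q) = hd p" "last (p @ tl q) = last q"
    "length (p @ tl q) - 1 = (length p - 1) + (length q - 1)"
proof -
  have ne: "p \<noteq> []" "q \<noteq> []" using assms(1,2) by (auto simp: walk_def)
  show "walk A (p @ tl q)" using assms by (rule walk_append_tl)
  show "hd (p @ tl q) = hd p" using ne by simp
  show "last (p @ tl q) = last q" using ne assms(3) by (cases q) auto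
  show "length (p @ tl q) - 1 = (length p - 1) + (length q - 1)" using ne by (cases p) auto
qed

lemma walk_cut_loop:
  assumes "walk A p" "i < j" "j < length p" "p ! i = p ! j"
  shows "walk A (take i p @ drop j p)" "hd (take i p @ drop j p) = hd p"
    "last (take i p @ drop j p) = last p" "length (take i p @ drop j p) < length p"
proof -
  have eq: "take i p @ drop j p = take (Suc i) p @ tl (drop j p)"
    using assms(2-4) by (simp add: take_Suc_conv_app_nth Cons_nth_drop_Suc[symmetric] drop_Suc tl_drop)
  show "walk A (take i p @ drop j p)" unfolding eq using assms
    by (intro walk_append_tl walk_take walk_drop)
      (auto simp: take_Suc_conv_app_nth hd_drop_conv_nth)
  show "hd (take i p @ drop j p) = hd p" using assms(2-4)
    by (cases p; cases i) (auto simp: hd_drop_conv_nth)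
  show "last (take i p @ drop j p) = last p" using assms(3) by simp
  show "length (take i p @ drop j p) < length p" using assms(2,3) by simp
qed

lemma walk_shorten_distinct:
  assumes "walk A p"
  obtains q where "walk A q" "hd q = hd p" "last q = last p" "length q \<le> length p" "distinct q"
  using assms
proof (induction "length p" arbitrary: p rule: less_induct)
  case less
  show ?case
  proof (cases "distinct p")
    case True then show ?thesis using less.prems by blast
  next
    case False
    then obtain i j where "i < j" "j < length p" "p ! i = p ! j"
      by (metis distinct_conv_nth linorder_neqE_nat)
    from walk_cut_loop[OF less.prems(2) this] less.hyps less.prems(1) show ?thesis
      by (metis order.strict_implies_order order.trans)
  qed
qed

lemma gdist_le_walk:
  assumes "walk A p" "hd p = u" "last p = v"
  shows "gdist A u v \<le> enat (length p - 1)"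
  unfolding gdist_def using assms by (auto intro!: INF_lower2)

lemma gdist_attained:
  assumes "gdist A u v \<noteq> \<infinity>"
  obtains p where "walk A p" "hd p = u" "last p = v" "gdist A u v = enat (length p - 1)"
proof -
  let ?P = "{p. walk A p \<and> hd p = u \<and> last p = v}"
  have "?P \<noteq> {}"
  proof
    assume "?P = {}"
    then have "gdist A u v = \<infinity>" unfolding gdist_def by (simp only:) (simp add: Inf_enat_def)
    with assms show False ..
  qed
  then have "gdist A u v \<in> (\<lambda>p. enat (length p - 1)) ` ?P"
    unfolding gdist_def Inf_enat_def by (auto intro: LeastI)
  then show ?thesis using that by auto
qed

lemma graph_edgeD:
  assumes "graph V E" "{x, y} \<in> E"
  shows "x \<in> V" "y \<in> V"
  using assms unfolding graph_def by (auto simp: doubleton_eq_iff)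

lemma walk_in_vertices:
  assumes "graph V E" "walk E p" "hd p \<in> V"
  shows "set p \<subseteq> V"
  using assms(2,3)
proof (induction p rule: induct_list012)
  case (3 x y zs)
  then have "{x, y} \<in> E" "walk E (y # zs)" by (simp_all add: walk_Cons_Cons)
  with 3 show ?case using graph_edgeD(2)[OF assms(1)] by simp
qed simp_all

lemma spanner_edge_walk:
  assumes "is_spanner V E H k" "u \<in> V" "v \<in> V" "{u, v} \<in> E"
  obtains p where "walk H p" "hd p = u" "last p = v" "length p - 1 \<le> k"
proof -
  have "gdist E u v \<le> 1"
    using gdist_le_walk[of E "[u, v]"] assms(4) by (simp add: walk_Cons_Cons one_enat_def)
  then have "enat k * gdist E u v \<le> enat k"
    using mult_left_mono[of "gdist E u v" 1 "enat k"] by simp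
  then have "gdist H u v \<le> enat k"
    using assms(1-3) unfolding is_spanner_def by (blast intro: order.trans)
  then obtain p where "walk H p" "hd p = u" "last p = v" "gdist H u v = enat (length p - 1)"
    by (metis gdist_attained enat_ord_simps(4) infinity_ileE)
  with \<open>gdist H u v \<le> enat k\<close> show ?thesis using that by simp
qed

lemma walk_stretch:
  assumes "walk E p"
    and edge: "\<And>u v. {u, v} \<in> E \<Longrightarrow> \<exists>q. walk H q \<and> hd q = u \<and> last q = v \<and> length q - 1 \<le> k"
  shows "\<exists>q. walk H q \<and> hd q = hd p \<and> last q = last p \<and> length q - 1 \<le> k * (length p - 1)"
  using assms(1)
proof (induction p rule: induct_list012)
  case (2 x) show ?case by (intro exI[of _ "[x]"]) simp
next
  case (3 x y zs)
  then obtain q where q: "walk H q" "hd q = y" "last q = last (y # zs)"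
    "length q - 1 \<le> k * length zs"
    by (auto simp: walk_Cons_Cons)
  obtain q1 where q1: "walk H q1" "hd q1 = x" "last q1 = y" "length q1 - 1 \<le> k"
    using edge "3.prems" by (auto simp: walk_Cons_Cons)
  note j = walk_join[OF q1(1) q(1)]
  have "length (q1 @ tl q) - 1 \<le> k * (length (x # y # zs) - 1)"
    using q(2,4) q1(3,4) j(4) by simp
  then show ?case using j q q1 by (intro exI[of _ "q1 @ tl q"]) simp
qed (simp add: walk_def)

lemma spanner_if_edges_stretched:
  assumes "H' \<subseteq> E" "0 < k"
    and edge: "\<And>u v. {u, v} \<in> E \<Longrightarrow> \<exists>q. walk H' q \<and> hd q = u \<and> last q = v \<and> length q - 1 \<le> k"
  shows "is_spanner V E H' k"
  unfolding is_spanner_def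
proof (intro conjI ballI)
  fix u v
  show "gdist H' u v \<le> enat k * gdist E u v"
  proof (cases "gdist E u v = \<infinity>")
    case True
    then show ?thesis using assms(2) by (simp add: imult_infinity_right)
  next
    case False
    then obtain p where p: "walk E p" "hd p = u" "last p = v" "gdist E u v = enat (length p - 1)"
      by (rule gdist_attained)
    obtain q where q: "walk H' q" "hd q = u" "last q = v" "length q - 1 \<le> k * (length p - 1)"
      using walk_stretch[OF p(1) edge] p(2,3) by blast
    have "gdist H' u v \<le> enat (length q - 1)" using gdist_le_walk[OF q(1-3)] .
    also have "\<dots> \<le> enat k * gdist E u v" using q(4) p(4) by simp
    finally show ?thesis .
  qed
qed (rule assms(1))

lemma sum_diff_le_diff_sum:
  fixes f :: "'b \<Rightarrow> nat"
  shows "(\<Sum>x\<in>A. f x - c) \<le> (\<Sum>x\<in>A. f x) - c"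
proof (cases "finite A \<and> (\<exists>x0\<in>A. c \<le> f x0)")
  case True
  then obtain x0 where A: "finite A" "x0 \<in> A" "c \<le> f x0" by blast
  have "(\<Sum>x\<in>A. f x - c) = (f x0 - c) + (\<Sum>x\<in>A - {x0}. f x - c)"
    using A by (simp add: sum.remove)
  also have "\<dots> \<le> (f x0 - c) + (\<Sum>x\<in>A - {x0}. f x)"
    by (intro add_left_mono sum_mono) simp
  also have "\<dots> = (\<Sum>x\<in>A. f x) - c"
    using A by (simp add: sum.remove)
  finally show ?thesis .
next
  case False
  then have "(\<Sum>x\<in>A. f x - c) = 0" by (cases "finite A") auto
  then show ?thesis by simp
qed

lemma exists_weights_reduced_by_slack:
  fixes \<kappa> :: "'b \<Rightarrow> nat"
  assumes "finite A" "A \<noteq> {}"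
  obtains r where "\<And>p q. p \<in> A \<Longrightarrow> q \<in> A \<Longrightarrow> p \<noteq> q \<Longrightarrow> \<kappa> p + \<kappa> q \<le> r p + r q + s"
    and "(\<Sum>x\<in>A. r x) \<le> (\<Sum>x\<in>A. \<kappa> x) - s"
proof -
  have "Max (\<kappa> ` A) \<in> \<kappa> ` A" using assms by simp
  then obtain m where "m \<in> A" "\<kappa> m = Max (\<kappa> ` A)" by (metis imageE)
  then have m: "m \<in> A" "\<And>y. y \<in> A \<Longrightarrow> \<kappa> y \<le> \<kappa> m" using assms(1) by auto
  define r where "r y = (if y = m then \<kappa> m - s else \<kappa> y - (s - \<kappa> m))" for y
  have "\<kappa> p + \<kappa> q \<le> r p + r q + s" if "p \<in> A" "q \<in> A" "p \<noteq> q" for p q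
    using m(2)[OF that(1)] m(2)[OF that(2)] that(3) unfolding r_def by auto
  moreover have "(\<Sum>x\<in>A. r x) \<le> (\<Sum>x\<in>A. \<kappa> x) - s"
  proof -
    have "(\<Sum>x\<in>A. r x) = (\<kappa> m - s) + (\<Sum>x\<in>A - {m}. \<kappa> x - (s - \<kappa> m))"
      using assms(1) m(1) by (simp add: sum.remove r_def)
    also have "\<dots> \<le> (\<kappa> m - s) + ((\<Sum>x\<in>A - {m}. \<kappa> x) - (s - \<kappa> m))"
      by (intro add_left_mono sum_diff_le_diff_sum)
    also have "\<dots> \<le> (\<Sum>x\<in>A. \<kappa> x) - s"
      using assms(1) m(1) by (simp add: sum.remove)
    finally show ?thesis .
  qed
  ultimately show ?thesis using that by blast
qed

text \<open>Vertex indices of a cycle of length L: deleting the edge between j and j + 1 mod L leaves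
  a path starting at j + 1, on which vertex p sits at position cut_pos L j p. Edges are indexed
  by their first vertex, and arc_ball L p \<rho> holds the \<rho> edges on either side of p.\<close>

definition cut_pos :: "nat \<Rightarrow> nat \<Rightarrow> nat \<Rightarrow> nat" where
  "cut_pos L j p = (p + L - Suc j) mod L"

definition arc_ball :: "nat \<Rightarrow> nat \<Rightarrow> nat \<Rightarrow> nat set" where
  "arc_ball L p \<rho> = (\<lambda>t. (p + L - Suc t) mod L) ` {..<\<rho>} \<union> (\<lambda>t. (p + t) mod L) ` {..<\<rho>}"

lemma finite_arc_ball: "finite (arc_ball L p \<rho>)"
  unfolding arc_ball_def by simp

lemma card_arc_ball: "card (arc_ball L p \<rho>) \<le> 2 * \<rho>"
proof -
  have "card (arc_ball L p \<rho>) \<le> card ((\<lambda>t. (p + L - Suc t) mod L) ` {..<\<rho>}) + card ((\<lambda>t. (p + t) mod L) ` {..<\<rho>})"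
    unfolding arc_ball_def by (rule card_Un_le)
  also have "\<dots> \<le> \<rho> + \<rho>" by (intro add_mono) (metis card_image_le card_lessThan finite_lessThan)+
  finally show ?thesis by simp
qed

lemma mod_less_double:
  fixes x L :: nat
  assumes "x < 2 * L"
  shows "x mod L = (if x < L then x else x - L)"
proof (cases "x < L")
  case False
  then have "x mod L = (x - L) mod L" by (simp add: le_mod_geq)
  then show ?thesis using assms False by simp
qed simp

lemma cut_pos_less: "0 < L \<Longrightarrow> cut_pos L j p < L"
  unfolding cut_pos_def by simp

lemma cut_pos_eq:
  assumes "j < L" "p < L"
  shows "cut_pos L j p = (if j < p then p - Suc j else p + L - Suc j)"
  using assms unfolding cut_pos_def by (subst mod_less_double) auto

lemma mem_arc_ball:
  assumes "j < L" "p < L" "cut_pos L j p < \<rho> \<or> L - \<rho> \<le> cut_pos L j p"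
  shows "j \<in> arc_ball L p \<rho>"
  using assms(3)
proof
  assume "cut_pos L j p < \<rho>"
  moreover have "j = (p + L - Suc (cut_pos L j p)) mod L"
    using assms(1,2) by (auto simp: cut_pos_eq)
  ultimately show ?thesis unfolding arc_ball_def by blast
next
  assume "L - \<rho> \<le> cut_pos L j p"
  moreover have "cut_pos L j p < L" using assms(1) by (simp add: cut_pos_less)
  ultimately have "L - Suc (cut_pos L j p) < \<rho>" by linarith
  moreover have "j = (p + (L - Suc (cut_pos L j p))) mod L"
    using assms(1,2) by (auto simp: cut_pos_eq)
  ultimately show ?thesis unfolding arc_ball_def by blast
qed

lemma arc_ball_cover:
  assumes "j < L" "p < L" "q < L"
    and "L \<le> (cut_pos L j p - cut_pos L j q) + (cut_pos L j q - cut_pos L j p) + \<rho>\<^sub>p + \<rho>\<^sub>q"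
  shows "j \<in> arc_ball L p \<rho>\<^sub>p \<union> arc_ball L q \<rho>\<^sub>q"
proof -
  have "cut_pos L j p < L" "cut_pos L j q < L" using assms(1) by (simp_all add: cut_pos_less)
  then have "(cut_pos L j p < \<rho>\<^sub>p \<or> L - \<rho>\<^sub>p \<le> cut_pos L j p) \<or> (cut_pos L j q < \<rho>\<^sub>q \<or> L - \<rho>\<^sub>q \<le> cut_pos L j q)"
    using assms(4) by linarith
  then show ?thesis using mem_arc_ball assms(1-3) by blast
qed

lemma exists_edge_outside_arc_balls:
  assumes "2 * (\<Sum>x<L. r x) < L"
  obtains j where "j < L" "j \<notin> (\<Union>x<L. arc_ball L x (r x))"
proof -
  have "card (\<Union>x<L. arc_ball L x (r x)) \<le> (\<Sum>x<L. card (arc_ball L x (r x)))"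
    by (rule card_UN_le) simp
  also have "\<dots> \<le> (\<Sum>x<L. 2 * r x)" by (intro sum_mono card_arc_ball)
  also have "\<dots> < card {..<L}" using assms by (simp add: sum_distrib_left)
  finally have "\<not> {..<L} \<subseteq> (\<Union>x<L. arc_ball L x (r x))"
    using card_mono[OF finite_UN_I[OF finite_lessThan finite_arc_ball]] by (meson leD)
  then show ?thesis using that by blast
qed

locale cycle_in_subgraph =
  fixes V :: "'a set" and E H :: "'a set set" and C :: "'a list"
  assumes graph: "graph V E" and subgraph: "H \<subseteq> E" and cycle: "is_cycle V H C"
begin

abbreviation "L \<equiv> length C"

definition off_cycle :: "'a set" where
  "off_cycle = V - set C"

definition reaches :: "'a \<Rightarrow> nat \<Rightarrow> nat \<Rightarrow> bool" where
  "reaches w i t \<longleftrightarrow> (\<exists>p. walk H p \<and> hd p = w \<and> last p = C ! i \<and> length p = Suc t)"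

definition attached :: "'a \<Rightarrow> bool" where
  "attached w \<longleftrightarrow> (\<exists>i t. i < L \<and> reaches w i t)"

definition depth :: "'a \<Rightarrow> nat" where
  "depth w = (LEAST t. \<exists>i<L. reaches w i t)"

definition root :: "'a \<Rightarrow> nat" where
  "root w = (LEAST i. i < L \<and> reaches w i (depth w))"

definition tree_size :: "nat \<Rightarrow> nat" where
  "tree_size x = card {w \<in> off_cycle. attached w \<and> root w = x}"

lemma length_cycle: "3 \<le> L"
  using cycle unfolding is_cycle_def by simp

lemma length_pos: "0 < L"
  using length_cycle by linarith

lemma distinct_cycle: "distinct C"
  using cycle unfolding is_cycle_def by simp

lemma cycle_edge: "i < L \<Longrightarrow> {C ! i, C ! ((i + 1) mod L)} \<in> H"
  using cycle unfolding is_cycle_def by simp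

lemma finite_off_cycle: "finite off_cycle"
  using graph unfolding off_cycle_def graph_def by simp

lemma card_off_cycle: "card off_cycle = card V - L"
  using cycle graph distinct_card[OF distinct_cycle]
  unfolding off_cycle_def is_cycle_def graph_def by (simp add: card_Diff_subset)

lemma walk_in_vertices_H: "walk H p \<Longrightarrow> hd p \<in> V \<Longrightarrow> set p \<subseteq> V"
  using walk_in_vertices[OF graph] walk_mono[OF _ subgraph] by blast

lemma reachesI:
  assumes "walk H p" "hd p = w" "last p = C ! i"
  shows "reaches w i (length p - 1)"
  using assms unfolding reaches_def walk_def by (intro exI[of _ p]) simp

lemma depth_le: "i < L \<Longrightarrow> reaches w i t \<Longrightarrow> depth w \<le> t"
  unfolding depth_def by (auto intro: Least_le)

lemma reaches_root:
  assumes "attached w"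
  shows "root w < L" "reaches w (root w) (depth w)"
proof -
  have "\<exists>t. \<exists>i<L. reaches w i t" using assms unfolding attached_def by blast
  then have "\<exists>i<L. reaches w i (depth w)" unfolding depth_def by (rule LeastI_ex)
  then have "\<exists>i. i < L \<and> reaches w i (depth w)" by blast
  then have "root w < L \<and> reaches w (root w) (depth w)" unfolding root_def by (rule LeastI_ex)
  then show "root w < L" "reaches w (root w) (depth w)" by auto
qed

lemma root_le: "i < L \<Longrightarrow> reaches w i (depth w) \<Longrightarrow> root w \<le> i"
  unfolding root_def by (auto intro: Least_le)

lemma reaches_via_walk:
  assumes "walk H q" "hd q = w" "last q = w'" "reaches w' i t"
  shows "reaches w i (length q - 1 + t)"
proof -
  obtain p where p: "walk H p" "hd p = w'" "last p = C ! i" "length p = Suc t"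
    using assms(4) unfolding reaches_def by blast
  note j = walk_join[OF assms(1) p(1)]
  show ?thesis using reachesI[OF j(1)] j(2-4) assms(2,3) p(2-4) by simp
qed

lemma depth_le_hit:
  assumes "walk H p" "hd p = w" "t < length p" "p ! t \<in> set C"
  shows "attached w" "depth w \<le> t"
proof -
  obtain i where i: "i < L" "p ! t = C ! i" using assms(4) by (metis in_set_conv_nth)
  have "walk H (take (Suc t) p)" using walk_take[OF assms(1)] by simp
  moreover have "hd (take (Suc t) p) = w" using assms(2,3) by (cases p) auto
  moreover have "last (take (Suc t) p) = C ! i" using assms(3) i(2) by (simp add: take_Suc_conv_app_nth)
  ultimately have "reaches w i t" using reachesI assms(3) by fastforce
  then show "attached w" "depth w \<le> t" using i(1) depth_le unfolding attached_def by blast+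
qed

lemma depth_on_cycle: "w \<in> set C \<Longrightarrow> attached w \<and> depth w = 0"
  using depth_le_hit[of "[w]" w 0] by simp

lemma root_walk_vertex:
  assumes "attached w" "walk H p" "hd p = w" "last p = C ! root w" "length p = Suc (depth w)"
    and "t \<le> depth w"
  shows "attached (p ! t)" "depth (p ! t) = depth w - t" "root (p ! t) = root w"
proof -
  have rw: "root w < L" using reaches_root(1)[OF assms(1)] .
  have "reaches (p ! t) (root w) (depth w - t)"
    using reachesI[OF walk_drop[OF assms(2)]] assms(4-6) by (simp add: hd_drop_conv_nth)
  then have att: "attached (p ! t)" and le: "depth (p ! t) \<le> depth w - t"
    using rw depth_le unfolding attached_def by blast+
  then show "attached (p ! t)" by blast
  have "walk H (take (Suc t) p)" using walk_take[OF assms(2)] by simp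
  moreover have "hd (take (Suc t) p) = w" using assms(3,5) by (cases p) auto
  moreover have "last (take (Suc t) p) = p ! t" using assms(5,6) by (simp add: take_Suc_conv_app_nth)
  ultimately have "reaches w (root (p ! t)) (length (take (Suc t) p) - 1 + depth (p ! t))"
    using reaches_via_walk reaches_root(2)[OF att] by blast
  then have "reaches w (root (p ! t)) (t + depth (p ! t))" using assms(5,6) by simp
  moreover have "depth w \<le> t + depth (p ! t)"
    using depth_le[OF reaches_root(1)[OF att] calculation] .
  ultimately show eq: "depth (p ! t) = depth w - t" using le by linarith
  have "root (p ! t) \<le> root w"
    using root_le[OF rw] \<open>reaches (p ! t) (root w) (depth w - t)\<close> eq by simp
  moreover have "root w \<le> root (p ! t)"
    using root_le[OF reaches_root(1)[OF att]] \<open>reaches w (root (p ! t)) (t + depth (p ! t))\<close> eq assms(6)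
    by simp
  ultimately show "root (p ! t) = root w" by simp
qed

lemma depth_le_tree_size:
  assumes "attached w" "w \<in> V"
  shows "depth w \<le> tree_size (root w)"
proof -
  obtain p where p: "walk H p" "hd p = w" "last p = C ! root w" "length p = Suc (depth w)"
    using reaches_root(2)[OF assms(1)] unfolding reaches_def by blast
  note leg = root_walk_vertex[OF assms(1) p]
  have inj: "inj_on (nth p) {..<depth w}"
  proof (rule inj_onI)
    fix s t assume st: "s \<in> {..<depth w}" "t \<in> {..<depth w}" "p ! s = p ! t"
    then have "depth w - s = depth w - t" using leg(2)[of s] leg(2)[of t] by simp
    then show "s = t" using st(1,2) by simp
  qed
  have sub: "nth p ` {..<depth w} \<subseteq> {w' \<in> off_cycle. attached w' \<and> root w' = root w}"
  proof safe
    fix t assume "t < depth w"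
    moreover have "p ! t \<in> V" using walk_in_vertices_H[OF p(1)] p(2,4) assms(2) calculation by auto
    ultimately show "p ! t \<in> off_cycle"
      using leg(2) depth_on_cycle unfolding off_cycle_def by fastforce
  qed (simp_all add: leg less_imp_le)
  have "finite {w' \<in> off_cycle. attached w' \<and> root w' = root w}"
    using finite_off_cycle by simp
  from card_inj_on_le[OF inj sub this] show ?thesis unfolding tree_size_def by simp
qed

lemma sum_tree_size_le: "(\<Sum>x<L. tree_size x) \<le> card off_cycle"
proof -
  let ?T = "\<lambda>x. {w \<in> off_cycle. attached w \<and> root w = x}"
  have "(\<Sum>x<L. tree_size x) = card (\<Union>x<L. ?T x)"
    unfolding tree_size_def using finite_off_cycle by (intro card_UN_disjoint[symmetric]) auto
  also have "\<dots> \<le> card off_cycle" using finite_off_cycle by (intro card_mono) auto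
  finally show ?thesis .
qed

lemma depth_sum_le_off_cycle:
  assumes "walk H p" "distinct p" "hd p = u" "last p = v" "u \<in> V" "i < length p" "p ! i \<in> set C"
  shows "attached u" "attached v" "depth u + depth v \<le> card off_cycle"
proof -
  let ?n = "length p"
  show "attached u" using depth_le_hit(1)[OF assms(1,3,6,7)] .
  have du: "depth u \<le> i" using depth_le_hit(2)[OF assms(1,3,6,7)] .
  have rev: "walk H (rev p)" "hd (rev p) = v" "\<And>t. t < ?n \<Longrightarrow> rev p ! (?n - 1 - t) = p ! t"
    using walk_rev[OF assms(1)] assms(4) assms(6) by (auto simp: hd_rev rev_nth)
  have off_suffix: "p ! t \<notin> set C" if "t < ?n" "?n - 1 - t < depth v" for t
    using depth_le_hit(2)[OF rev(1,2), of "?n - 1 - t"] rev(3) that by fastforce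
  have "rev p ! (?n - 1 - i) \<in> set C" "?n - 1 - i < ?n" using rev(3) assms(6,7) by auto
  then have "attached v" and dv: "depth v \<le> ?n - 1 - i" using depth_le_hit[OF rev(1,2)] by auto
  then show "attached v" by blast
  txt \<open>The first depth u and the last depth v vertices of p are off the cycle, or u resp. v
    would be closer to it; both runs stay on their side of position i, so they are disjoint.\<close>
  define I where "I = {..<depth u} \<union> {?n - depth v..<?n}"
  have cardI: "card I = depth u + depth v"
    unfolding I_def using du dv assms(6) by (subst card_Un_disjoint) auto
  have injI: "inj_on (nth p) I"
    using assms(2) du dv assms(6) unfolding I_def by (intro inj_on_nth) auto
  have subI: "nth p ` I \<subseteq> off_cycle"
  proof
    fix x assume "x \<in> nth p ` I"
    then obtain t where t: "t \<in> I" "x = p ! t" by blast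
    then have "t < ?n" unfolding I_def using du assms(6) by auto
    then have "p ! t \<in> V" using walk_in_vertices_H[OF assms(1)] assms(3,5) by auto
    moreover have "p ! t \<notin> set C"
    proof
      assume "p ! t \<in> set C"
      then have "depth u \<le> t" by (rule depth_le_hit(2)[OF assms(1,3) \<open>t < ?n\<close>])
      then have "?n - 1 - t < depth v" using t(1) unfolding I_def by auto
      then show False using off_suffix \<open>t < ?n\<close> \<open>p ! t \<in> set C\<close> by blast
    qed
    ultimately show "x \<in> off_cycle" unfolding off_cycle_def using t(2) by simp
  qed
  then show "depth u + depth v \<le> card off_cycle"
    using card_inj_on_le[OF injI _ finite_off_cycle] cardI by simp
qed

lemma cycle_edge_inj:
  assumes "i < L" "j < L" "{C ! i, C ! ((i + 1) mod L)} = {C ! j, C ! ((j + 1) mod L)}"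
  shows "i = j"
proof -
  have nth_inj: "a < L \<Longrightarrow> b < L \<Longrightarrow> C ! a = C ! b \<Longrightarrow> a = b" for a b
    using distinct_cycle nth_eq_iff_index_eq by blast
  consider "C ! i = C ! j" | "C ! i = C ! ((j + 1) mod L)" "C ! ((i + 1) mod L) = C ! j"
    using assms(3) by (auto simp: doubleton_eq_iff)
  then show ?thesis
  proof cases
    case 1 then show ?thesis using nth_inj assms(1,2) by blast
  next
    case 2
    then have i: "i = (j + 1) mod L" and j: "j = (i + 1) mod L" using nth_inj assms(1,2) length_pos by auto
    have "i = (if j + 1 = L then 0 else j + 1)" using i assms(2) by (simp add: mod_Suc)
    moreover have "j = (if i + 1 = L then 0 else i + 1)" using j assms(1) by (simp add: mod_Suc)
    ultimately show ?thesis using length_cycle by (split if_split_asm; split if_split_asm; linarith)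
  qed
qed

lemma walk_avoiding_cycle_edge:
  assumes "walk H p" "\<And>t. Suc t < length p \<Longrightarrow> p ! t \<notin> set C" "e \<subseteq> set C"
  shows "walk (H - {e}) p"
  unfolding walk_def
proof (intro conjI allI impI)
  show "p \<noteq> []" using assms(1) by (simp add: walk_def)
  fix t assume t: "Suc t < length p"
  then have "{p ! t, p ! Suc t} \<in> H" using assms(1) unfolding walk_def by blast
  moreover have "{p ! t, p ! Suc t} \<noteq> e" using assms(2)[OF t] assms(3) by blast
  ultimately show "{p ! t, p ! Suc t} \<in> H - {e}" by blast
qed

lemma root_walk_avoiding:
  assumes "attached w" "e \<subseteq> set C"
  obtains p where "walk (H - {e}) p" "hd p = w" "last p = C ! root w" "length p = Suc (depth w)"
proof -
  obtain p where p: "walk H p" "hd p = w" "last p = C ! root w" "length p = Suc (depth w)"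
    using reaches_root(2)[OF assms(1)] unfolding reaches_def by blast
  have "p ! t \<notin> set C" if "Suc t < length p" for t
    using depth_le_hit(2)[OF p(1,2), of t] that p(4) by fastforce
  then have "walk (H - {e}) p" using walk_avoiding_cycle_edge[OF p(1) _ assms(2)] by blast
  then show ?thesis using that p by blast
qed

end

locale cut_cycle = cycle_in_subgraph +
  fixes j :: nat
  assumes cut_index: "j < L"
begin

definition cut_edge :: "'a set" where
  "cut_edge = {C ! j, C ! ((j + 1) mod L)}"

definition path_vertex :: "nat \<Rightarrow> 'a" where
  "path_vertex t = C ! ((Suc j + t) mod L)"

definition cut_dist :: "nat \<Rightarrow> nat \<Rightarrow> nat" where
  "cut_dist p q = (cut_pos L j p - cut_pos L j q) + (cut_pos L j q - cut_pos L j p)"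

lemma cut_edge_subset: "cut_edge \<subseteq> set C"
  unfolding cut_edge_def using cut_index length_pos by auto

lemma cut_edge_mem_cycle_edges: "cut_edge \<in> cycle_edges C"
  unfolding cut_edge_def cycle_edges_def using cut_index by blast

lemma path_vertex_edge:
  assumes "Suc t < L"
  shows "{path_vertex t, path_vertex (Suc t)} \<in> H - {cut_edge}"
proof -
  define m where "m = (Suc j + t) mod L"
  have m: "m < L" unfolding m_def using length_pos by simp
  have "{path_vertex t, path_vertex (Suc t)} = {C ! m, C ! ((m + 1) mod L)}"
    unfolding path_vertex_def m_def by (simp add: mod_Suc_eq)
  moreover have "m \<noteq> j"
    using assms cut_index unfolding m_def by (subst mod_less_double) auto
  then have "{C ! m, C ! ((m + 1) mod L)} \<noteq> cut_edge"
    unfolding cut_edge_def using cycle_edge_inj m cut_index by blast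
  ultimately show ?thesis using cycle_edge[OF m] by simp
qed

lemma path_segment:
  assumes "a \<le> b" "b < L"
  shows "walk (H - {cut_edge}) (map path_vertex [a..<Suc b])"
    and "hd (map path_vertex [a..<Suc b]) = path_vertex a"
    and "last (map path_vertex [a..<Suc b]) = path_vertex b"
    and "length (map path_vertex [a..<Suc b]) - 1 = b - a"
proof -
  show "walk (H - {cut_edge}) (map path_vertex [a..<Suc b])"
    unfolding walk_def
  proof (intro conjI allI impI)
    show "map path_vertex [a..<Suc b] \<noteq> []" using assms by simp
    fix i assume i: "Suc i < length (map path_vertex [a..<Suc b])"
    then have "{path_vertex (a + i), path_vertex (Suc (a + i))} \<in> H - {cut_edge}"
      using assms by (intro path_vertex_edge) simp
    then show "{map path_vertex [a..<Suc b] ! i, map path_vertex [a..<Suc b] ! Suc i} \<in> H - {cut_edge}"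
      using i by (simp del: upt_Suc)
  qed
  show "hd (map path_vertex [a..<Suc b]) = path_vertex a"
    and "last (map path_vertex [a..<Suc b]) = path_vertex b"
    using assms(1) by (simp_all del: upt_Suc add: hd_map last_map hd_upt last_upt)
qed simp

lemma path_vertex_cut_pos:
  assumes "p < L"
  shows "path_vertex (cut_pos L j p) = C ! p"
proof -
  have "Suc j + cut_pos L j p = (if j < p then p else p + L)"
    using assms cut_index length_pos by (simp add: cut_pos_eq)
  then have "(Suc j + cut_pos L j p) mod L = p" using assms by (simp split: if_splits)
  then show ?thesis unfolding path_vertex_def by simp
qed

lemma arc_walk:
  assumes "p < L" "q < L"
  obtains w where "walk (H - {cut_edge}) w" "hd w = C ! p" "last w = C ! q"
    "length w - 1 = cut_dist p q"
proof (cases "cut_pos L j p \<le> cut_pos L j q")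
  case True
  note seg = path_segment[OF True cut_pos_less[OF length_pos]]
  show ?thesis
    using that[OF seg(1)] seg(2-4) path_vertex_cut_pos assms True unfolding cut_dist_def by simp
next
  case False
  then have "cut_pos L j q \<le> cut_pos L j p" by simp
  note seg = path_segment[OF this cut_pos_less[OF length_pos]]
  show ?thesis
    using that[OF walk_rev[OF seg(1)]] seg(2-4) path_vertex_cut_pos assms False
    unfolding cut_dist_def by (simp del: upt_Suc add: hd_rev last_rev)
qed

lemma detour_walk:
  assumes "attached u" "attached v"
  obtains w where "walk (H - {cut_edge}) w" "hd w = u" "last w = v"
    "length w - 1 = depth u + cut_dist (root u) (root v) + depth v"
proof -
  obtain p where p: "walk (H - {cut_edge}) p" "hd p = u" "last p = C ! root u" "length p = Suc (depth u)"
    using root_walk_avoiding[OF assms(1) cut_edge_subset] .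
  obtain q where q: "walk (H - {cut_edge}) q" "hd q = v" "last q = C ! root v" "length q = Suc (depth v)"
    using root_walk_avoiding[OF assms(2) cut_edge_subset] .
  obtain a where a: "walk (H - {cut_edge}) a" "hd a = C ! root u" "last a = C ! root v"
    "length a - 1 = cut_dist (root u) (root v)"
    using arc_walk[OF reaches_root(1)[OF assms(1)] reaches_root(1)[OF assms(2)]] .
  have rq: "walk (H - {cut_edge}) (rev q)" "hd (rev q) = C ! root v" "last (rev q) = v"
    using walk_rev[OF q(1)] q(2-4) by (auto simp: hd_rev last_rev)
  note pa = walk_join[OF p(1) a(1)]
  note paq = walk_join[OF pa(1) rq(1)]
  show ?thesis
    using that[OF paq(1)] paq(2-4) pa(2-4) p(2-4) a(2-4) rq(2,3) q(4) by simp
qed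

lemma short_walk_avoiding_cut_edge:
  assumes outside: "j \<notin> (\<Union>x<L. arc_ball L x (r x))"
    and pair: "\<And>p q. p < L \<Longrightarrow> q < L \<Longrightarrow> p \<noteq> q \<Longrightarrow> tree_size p + tree_size q \<le> r p + r q + s"
    and budget: "k + 1 = s + L" and small: "card off_cycle \<le> k"
    and P0: "walk H P0" "hd P0 = u" "last P0 = v" "length P0 - 1 \<le> k"
    and uv: "u \<in> V" "v \<in> V"
  shows "\<exists>w. walk (H - {cut_edge}) w \<and> hd w = u \<and> last w = v \<and> length w - 1 \<le> k"
proof -
  obtain P where P: "walk H P" "hd P = u" "last P = v" "length P \<le> length P0" "distinct P"
    using walk_shorten_distinct[OF P0(1)] P0(2,3) by metis
  show ?thesis
  proof (cases "\<exists>i<length P. P ! i \<in> set C")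
    case False
    then have "walk (H - {cut_edge}) P"
      using walk_avoiding_cycle_edge[OF P(1) _ cut_edge_subset] by (meson Suc_lessD)
    then show ?thesis using P P0(4) by (intro exI[of _ P]) auto
  next
    case True
    then obtain i where "i < length P" "P ! i \<in> set C" by blast
    note hit = depth_sum_le_off_cycle[OF P(1,5,2,3) uv(1) this]
    obtain w where w: "walk (H - {cut_edge}) w" "hd w = u" "last w = v"
      "length w - 1 = depth u + cut_dist (root u) (root v) + depth v"
      using detour_walk[OF hit(1,2)] .
    have "depth u + cut_dist (root u) (root v) + depth v \<le> k"
    proof (rule ccontr)
      assume long: "\<not> ?thesis"
      have roots: "root u < L" "root v < L" using reaches_root(1) hit(1,2) by blast+
      have "root u \<noteq> root v" using long hit(3) small by (auto simp: cut_dist_def)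
      then have "depth u + depth v \<le> r (root u) + r (root v) + s"
        using depth_le_tree_size[OF hit(1) uv(1)] depth_le_tree_size[OF hit(2) uv(2)] pair[OF roots]
        by linarith
      then have "L \<le> cut_dist (root u) (root v) + r (root u) + r (root v)"
        using long budget by linarith
      then have "j \<in> arc_ball L (root u) (r (root u)) \<union> arc_ball L (root v) (r (root v))"
        using arc_ball_cover[OF cut_index roots] unfolding cut_dist_def by blast
      then show False using outside roots by blast
    qed
    then show ?thesis using w by auto
  qed
qed

lemma spanner_minus_cut_edge:
  assumes spanner: "is_spanner V E H k"
    and outside: "j \<notin> (\<Union>x<L. arc_ball L x (r x))"
    and pair: "\<And>p q. p < L \<Longrightarrow> q < L \<Longrightarrow> p \<noteq> q \<Longrightarrow> tree_size p + tree_size q \<le> r p + r q + s"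
    and budget: "k + 1 = s + L" and small: "card off_cycle \<le> k"
  shows "is_spanner V E (H - {cut_edge}) k"
proof (rule spanner_if_edges_stretched)
  fix u v assume uv: "{u, v} \<in> E"
  then have "u \<in> V" "v \<in> V" using graph_edgeD[OF graph] by blast+
  with uv obtain P where "walk H P" "hd P = u" "last P = v" "length P - 1 \<le> k"
    using spanner_edge_walk[OF spanner] by metis
  then show "\<exists>w. walk (H - {cut_edge}) w \<and> hd w = u \<and> last w = v \<and> length w - 1 \<le> k"
    using short_walk_avoiding_cut_edge[OF outside pair budget small] \<open>u \<in> V\<close> \<open>v \<in> V\<close> by simp
qed (use subgraph budget length_cycle in auto)

end

theorem lemma3p1:
  fixes V :: "'a set" and E H :: "'a set set" and n k :: nat and C :: "'a list"
  assumes "graph V E"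
    and "card V = n"
    and "is_spanner V E H k"
    and "is_cycle V H C"
    and "\<forall>C'. is_cycle V H C' \<longrightarrow> length C \<le> length C'"
    and "2 * (int n - int k) \<le> int (length C)"
    and "length C \<le> k + 1"
  shows "\<exists>e \<in> cycle_edges C. is_spanner V E (H - {e}) k"
proof -
  have "H \<subseteq> E" using assms(3) unfolding is_spanner_def by blast
  interpret cycle_in_subgraph V E H C using assms(1,4) \<open>H \<subseteq> E\<close> by unfold_locales
  define s where "s = k + 1 - L"
  have budget: "k + 1 = s + L" using assms(7) unfolding s_def by simp
  have "2 * n \<le> 2 * k + L" using assms(6) by presburger
  then have off: "2 * card off_cycle + L \<le> 2 * k"
    using assms(2,7) card_off_cycle length_cycle by linarith
  obtain r where pair: "\<And>p q. p \<in> {..<L} \<Longrightarrow> q \<in> {..<L} \<Longrightarrow> p \<noteq> q \<Longrightarrow>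
      tree_size p + tree_size q \<le> r p + r q + s"
    and "(\<Sum>x<L. r x) \<le> (\<Sum>x<L. tree_size x) - s"
    by (rule exists_weights_reduced_by_slack[of "{..<L}" tree_size s]) (use length_pos in auto)
  then have "2 * (\<Sum>x<L. r x) < L" using sum_tree_size_le off budget length_cycle by linarith
  then obtain j where "j < L" and outside: "j \<notin> (\<Union>x<L. arc_ball L x (r x))"
    by (rule exists_edge_outside_arc_balls)
  interpret cut_cycle V E H C j by unfold_locales (rule \<open>j < L\<close>)
  have "is_spanner V E (H - {cut_edge}) k"
    using spanner_minus_cut_edge[OF assms(3) outside pair[unfolded lessThan_iff] budget] off by simp
  then show ?thesis using cut_edge_mem_cycle_edges by blast
qed

end
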